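(* Let $L$ be a finite LC-loop and $x\in L$. Then the order of $x$ divides $|L|$.
   Context: An LC-loop is a loop satisfying $(xx)(yz)=(x(xy))z$ for all $x,y,z$; LC-loops are power associative, and the order of $x$ is the size of the subloop (cyclic group) generated by $x$, i.e. the least $n>0$ with $x^n=e$. *)

theory Defs
  imports Main
begin

definition is_loop :: "'a set \<Rightarrow> ('a \<Rightarrow> 'a \<Rightarrow> 'a) \<Rightarrow> 'a \<Rightarrow> bool" where
  "is_loop L m e \<longleftrightarrow>
     e \<in> L \<and>
     (\<forall>a\<in>L. \<forall>b\<in>L. m a b \<in> L) \<and>
     (\<forall>a\<in>L. m e a = a \<and> m a e = a) \<and>
     (\<forall>a\<in>L. \<forall>b\<in>L. \<exists>!x. x \<in> L \<and> m a x = b) \<and>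
     (\<forall>a\<in>L. \<forall>b\<in>L. \<exists>!y. y \<in> L \<and> m y a = b)"

definition is_LC_loop :: "'a set \<Rightarrow> ('a \<Rightarrow> 'a \<Rightarrow> 'a) \<Rightarrow> 'a \<Rightarrow> bool" where
  "is_LC_loop L m e \<longleftrightarrow> is_loop L m e \<and>
     (\<forall>x\<in>L. \<forall>y\<in>L. \<forall>z\<in>L. m (m x x) (m y z) = m (m x (m x y)) z)"

definition is_subloop :: "'a set \<Rightarrow> ('a \<Rightarrow> 'a \<Rightarrow> 'a) \<Rightarrow> 'a \<Rightarrow> 'a set \<Rightarrow> bool" where
  "is_subloop L m e H \<longleftrightarrow> H \<subseteq> L \<and> e \<in> H \<and>
     (\<forall>a\<in>H. \<forall>b\<in>H. m a b \<in> H) \<and>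
     (\<forall>a\<in>H. \<forall>b\<in>H. \<forall>x\<in>L. m a x = b \<longrightarrow> x \<in> H) \<and>
     (\<forall>a\<in>H. \<forall>b\<in>H. \<forall>y\<in>L. m y a = b \<longrightarrow> y \<in> H)"

definition gen_subloop :: "'a set \<Rightarrow> ('a \<Rightarrow> 'a \<Rightarrow> 'a) \<Rightarrow> 'a \<Rightarrow> 'a set \<Rightarrow> 'a set" where
  "gen_subloop L m e S = \<Inter>{H. is_subloop L m e H \<and> S \<subseteq> H}"

definition loop_order :: "'a set \<Rightarrow> ('a \<Rightarrow> 'a \<Rightarrow> 'a) \<Rightarrow> 'a \<Rightarrow> 'a \<Rightarrow> nat" where
  "loop_order L m e x = card (gen_subloop L m e {x})"

end

theory Submission
  imports Defs
begin

text \<open>Write \<open>x\<^sup>k\<close> for \<open>x(x(\<dots>(x e)))\<close>. The LC identity makes \<open>x x\<close> left nuclear and \<open>x\<close>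
  left alternative, and from this one gets by induction that left multiplication by \<open>x\<^sup>k\<close> is the
  \<open>k\<close>-th iterate of left multiplication by \<open>x\<close>. Hence the powers of \<open>x\<close> form a cyclic subloop
  whose order \<open>n\<close> is the least period of the powers, the orbits of left multiplication by \<open>x\<close>
  on \<open>L\<close> are the translates \<open>{x\<^sup>k y}\<close>, and by cancellation each of them has exactly \<open>n\<close>
  elements. These orbits partition \<open>L\<close>, so \<open>n\<close> divides \<open>|L|\<close>.\<close>

locale loop =
  fixes L :: "'a set" and m :: "'a \<Rightarrow> 'a \<Rightarrow> 'a" and e :: 'a
  assumes is_loop: "is_loop L m e"
begin

lemma one_closed: "e \<in> L"
  and mult_closed: "a \<in> L \<Longrightarrow> b \<in> L \<Longrightarrow> m a b \<in> L"
  and left_unit: "a \<in> L \<Longrightarrow> m e a = a"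
  and right_unit: "a \<in> L \<Longrightarrow> m a e = a"
  using is_loop by (simp_all add: is_loop_def)

lemma left_cancel:
  assumes "a \<in> L" "y \<in> L" "z \<in> L" and "m a y = m a z"
  shows "y = z"
proof -
  have "\<exists>!u. u \<in> L \<and> m a u = m a z"
    using is_loop assms(1,3) mult_closed by (simp add: is_loop_def)
  then show ?thesis using assms by blast
qed

lemma right_cancel:
  assumes "a \<in> L" "y \<in> L" "z \<in> L" and "m y a = m z a"
  shows "y = z"
proof -
  have "\<exists>!u. u \<in> L \<and> m u a = m z a"
    using is_loop assms(1,3) mult_closed by (simp add: is_loop_def)
  then show ?thesis using assms by blast
qed

definition lpow :: "'a \<Rightarrow> nat \<Rightarrow> 'a" where
  "lpow a k = (m a ^^ k) e"

lemma funpow_mult_closed: "a \<in> L \<Longrightarrow> y \<in> L \<Longrightarrow> (m a ^^ k) y \<in> L"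
  by (induction k) (simp_all add: mult_closed)

lemma lpow_closed: "a \<in> L \<Longrightarrow> lpow a k \<in> L"
  by (simp add: lpow_def funpow_mult_closed one_closed)

lemma funpow_mult_cancel:
  "a \<in> L \<Longrightarrow> y \<in> L \<Longrightarrow> z \<in> L \<Longrightarrow> (m a ^^ k) y = (m a ^^ k) z \<Longrightarrow> y = z"
  by (induction k) (auto dest: left_cancel[rotated 3] simp: funpow_mult_closed)

lemma funpow_mult_eq_imp_fixed:
  assumes "a \<in> L" "y \<in> L" "i \<le> j" and "(m a ^^ i) y = (m a ^^ j) y"
  shows "(m a ^^ (j - i)) y = y"
proof -
  have "(m a ^^ j) y = (m a ^^ i) ((m a ^^ (j - i)) y)"
    using \<open>i \<le> j\<close> by (metis funpow_add le_add_diff_inverse comp_apply)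
  with assms show ?thesis by (metis funpow_mult_cancel funpow_mult_closed)
qed

end

locale finite_loop = loop +
  assumes finite_carrier: "finite L"
begin

lemma ex_lpow_eq_one:
  assumes "a \<in> L"
  shows "\<exists>k>0. lpow a k = e"
proof -
  have "finite (range (lpow a))"
    using lpow_closed assms finite_carrier by (meson finite_subset image_subsetI)
  then have "\<not> inj (lpow a)"
    using finite_imageD infinite_UNIV_nat by blast
  then obtain i j where "i \<noteq> j" and "lpow a i = lpow a j"
    unfolding inj_def by blast
  then obtain i j where "i < j" and "lpow a i = lpow a j"
    by (cases "i < j") (auto simp: not_less_iff_gr_or_eq)
  then have "lpow a (j - i) = e"
    using funpow_mult_eq_imp_fixed[OF assms one_closed] by (simp add: lpow_def)
  then show ?thesis using \<open>i < j\<close> by (intro exI[of _ "j - i"]) simp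
qed

definition period :: "'a \<Rightarrow> nat" where
  "period a = (LEAST k. 0 < k \<and> lpow a k = e)"

lemma period_pos: "a \<in> L \<Longrightarrow> 0 < period a"
  and lpow_period: "a \<in> L \<Longrightarrow> lpow a (period a) = e"
  using LeastI_ex[OF ex_lpow_eq_one] by (auto simp: period_def)

lemma lpow_neq_one_below_period: "0 < k \<Longrightarrow> k < period a \<Longrightarrow> lpow a k \<noteq> e"
  unfolding period_def using not_less_Least by blast

end

locale lc_loop = loop +
  assumes lc_identity:
    "\<And>x y z. x \<in> L \<Longrightarrow> y \<in> L \<Longrightarrow> z \<in> L \<Longrightarrow> m (m x x) (m y z) = m (m x (m x y)) z"
begin

lemma left_alternative: "a \<in> L \<Longrightarrow> b \<in> L \<Longrightarrow> m (m a a) b = m a (m a b)"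
  using lc_identity[of a b e] by (simp add: one_closed right_unit mult_closed)

lemma square_left_nuclear:
  "a \<in> L \<Longrightarrow> b \<in> L \<Longrightarrow> c \<in> L \<Longrightarrow> m (m (m a a) b) c = m (m a a) (m b c)"
  by (simp add: lc_identity left_alternative)

lemma left_mult_lpow:
  assumes "a \<in> L" and "y \<in> L"
  shows "m (lpow a k) y = (m a ^^ k) y"
  using \<open>y \<in> L\<close>
proof (induction k arbitrary: y rule: induct_nat_012)
  case 0
  then show ?case by (simp add: lpow_def left_unit)
next
  case 1
  then show ?case by (simp add: lpow_def right_unit assms(1))
next
  case (ge2 k)
  have "lpow a (Suc (Suc k)) = m (m a a) (lpow a k)"
    by (simp add: lpow_def left_alternative assms(1) funpow_mult_closed one_closed)
  then have "m (lpow a (Suc (Suc k))) y = m (m a a) (m (lpow a k) y)"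
    by (simp add: square_left_nuclear assms(1) lpow_closed ge2.prems)
  also have "\<dots> = m a (m a ((m a ^^ k) y))"
    by (simp add: ge2 left_alternative assms(1) funpow_mult_closed)
  finally show ?case by simp
qed

lemma lpow_add: "a \<in> L \<Longrightarrow> lpow a (i + j) = m (lpow a i) (lpow a j)"
  by (simp add: left_mult_lpow lpow_closed) (simp add: lpow_def funpow_add)

end

locale finite_lc_loop = finite_loop + lc_loop
begin

lemma funpow_mult_period:
  assumes "a \<in> L" "y \<in> L"
  shows "(m a ^^ (period a * q)) y = y"
proof (induction q)
  case (Suc q)
  have "(m a ^^ (period a * Suc q)) y = (m a ^^ period a) ((m a ^^ (period a * q)) y)"
    by (simp add: funpow_add)
  also have "\<dots> = m (lpow a (period a)) y"
    using Suc assms by (simp add: left_mult_lpow)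
  finally show ?case using assms by (simp add: lpow_period left_unit)
qed simp

lemma funpow_mult_mod_period:
  assumes "a \<in> L" "y \<in> L"
  shows "(m a ^^ k) y = (m a ^^ (k mod period a)) y"
proof -
  have "(m a ^^ k) y = (m a ^^ (k mod period a)) ((m a ^^ (period a * (k div period a))) y)"
    by (metis comp_apply funpow_add mod_div_mult_eq mult.commute)
  then show ?thesis using assms by (simp add: funpow_mult_period)
qed

definition orbit :: "'a \<Rightarrow> 'a \<Rightarrow> 'a set" where
  "orbit a y = (\<lambda>k. (m a ^^ k) y) ` {..<period a}"

lemma orbit_eq_range:
  assumes "a \<in> L" "y \<in> L"
  shows "orbit a y = range (\<lambda>k. (m a ^^ k) y)"
proof -
  have "(m a ^^ k) y \<in> orbit a y" for k
    unfolding orbit_def using funpow_mult_mod_period[OF assms, of k]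
    by (rule image_eqI) (simp add: period_pos[OF assms(1)])
  then show ?thesis by (auto simp: orbit_def)
qed

lemma card_orbit:
  assumes "a \<in> L" "y \<in> L"
  shows "card (orbit a y) = period a"
proof -
  have "(m a ^^ i) y \<noteq> (m a ^^ j) y" if "i < j" "j < period a" for i j
  proof
    assume "(m a ^^ i) y = (m a ^^ j) y"
    then have "(m a ^^ (j - i)) y = y"
      using funpow_mult_eq_imp_fixed[OF assms less_imp_le[OF \<open>i < j\<close>]] by blast
    then have "m (lpow a (j - i)) y = m e y"
      by (simp only: left_mult_lpow[OF assms] left_unit[OF assms(2)])
    then have "lpow a (j - i) = e"
      by (rule right_cancel[OF assms(2) lpow_closed[OF assms(1)] one_closed])
    then show False using lpow_neq_one_below_period that by simp
  qed
  then have "inj_on (\<lambda>k. (m a ^^ k) y) {..<period a}"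
    by (intro linorder_inj_onI') auto
  then show ?thesis by (simp add: orbit_def card_image)
qed

definition orbit_rel :: "'a \<Rightarrow> ('a \<times> 'a) set" where
  "orbit_rel a = {(y, z). y \<in> L \<and> z \<in> orbit a y}"

lemma orbit_rel_iff:
  "a \<in> L \<Longrightarrow> (y, z) \<in> orbit_rel a \<longleftrightarrow> y \<in> L \<and> (\<exists>k. z = (m a ^^ k) y)"
  by (auto simp: orbit_rel_def orbit_eq_range)

lemma equiv_orbit_rel:
  assumes "a \<in> L"
  shows "equiv L (orbit_rel a)"
proof (rule equivI)
  show "orbit_rel a \<subseteq> L \<times> L"
    using assms by (auto simp: orbit_rel_iff funpow_mult_closed)
  show "refl_on L (orbit_rel a)"
    using assms by (auto simp: refl_on_def orbit_rel_iff intro: exI[of _ 0])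
  show "sym (orbit_rel a)"
  proof (rule symI)
    fix y z assume "(y, z) \<in> orbit_rel a"
    then obtain k where "y \<in> L" and z: "z = (m a ^^ k) y"
      using assms by (auto simp: orbit_rel_iff)
    have "period a * k = (period a - 1) * k + k"
      using period_pos[OF assms] by (cases "period a") simp_all
    then have "y = (m a ^^ ((period a - 1) * k)) z"
      using funpow_mult_period[OF assms \<open>y \<in> L\<close>, of k] z by (simp add: funpow_add)
    moreover have "z \<in> L" using z assms \<open>y \<in> L\<close> by (simp add: funpow_mult_closed)
    ultimately show "(z, y) \<in> orbit_rel a"
      using assms orbit_rel_iff by blast
  qed
  show "trans (orbit_rel a)"
  proof (rule transI)
    fix x y z assume "(x, y) \<in> orbit_rel a" "(y, z) \<in> orbit_rel a"
    then obtain i j where "x \<in> L" "y = (m a ^^ i) x" "z = (m a ^^ j) y"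
      using assms by (auto simp: orbit_rel_iff)
    then have "x \<in> L" and "z = (m a ^^ (j + i)) x" by (simp_all add: funpow_add)
    then show "(x, z) \<in> orbit_rel a"
      using assms orbit_rel_iff by blast
  qed
qed

lemma period_dvd_card:
  assumes "a \<in> L"
  shows "period a dvd card L"
proof (rule equiv_imp_dvd_card[OF finite_carrier equiv_orbit_rel[OF assms]])
  fix X assume "X \<in> L // orbit_rel a"
  then obtain y where "y \<in> L" and "X = orbit a y"
    by (auto elim!: quotientE simp: orbit_rel_def)
  then show "period a dvd card X" using card_orbit assms by simp
qed

lemma orbit_one: "a \<in> L \<Longrightarrow> orbit a e = range (lpow a)"
  by (simp add: orbit_eq_range one_closed lpow_def[abs_def])

lemma lpow_period_mult_add: "a \<in> L \<Longrightarrow> lpow a (period a * q + j) = lpow a j"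
  by (simp add: lpow_def funpow_add funpow_mult_period add.commute[of _ j] one_closed)

lemma lpow_add_solution: "a \<in> L \<Longrightarrow> lpow a (i + ((period a - 1) * i + j)) = lpow a j"
  using lpow_period_mult_add[of a i j] period_pos[of a] by (cases "period a") (simp_all add: add.assoc)

lemma left_mult_lpow_solution:
  assumes "a \<in> L" "z \<in> L" and "m (lpow a i) z = lpow a j"
  shows "z = lpow a ((period a - 1) * i + j)"
proof (rule left_cancel[OF lpow_closed[OF assms(1)] assms(2) lpow_closed[OF assms(1)]])
  show "m (lpow a i) z = m (lpow a i) (lpow a ((period a - 1) * i + j))"
    using assms lpow_add_solution lpow_add by simp
qed

lemma right_mult_lpow_solution:
  assumes "a \<in> L" "z \<in> L" and "m z (lpow a i) = lpow a j"
  shows "z = lpow a ((period a - 1) * i + j)"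
proof (rule right_cancel[OF lpow_closed[OF assms(1)] assms(2) lpow_closed[OF assms(1)]])
  show "m z (lpow a i) = m (lpow a ((period a - 1) * i + j)) (lpow a i)"
    using assms lpow_add_solution lpow_add add.commute by metis
qed

lemma is_subloop_orbit_one:
  assumes "a \<in> L"
  shows "is_subloop L m e (orbit a e)"
  unfolding is_subloop_def orbit_one[OF assms]
proof (intro conjI ballI allI impI)
  show "range (lpow a) \<subseteq> L" using lpow_closed assms by blast
  have "lpow a 0 = e" by (simp add: lpow_def)
  then show "e \<in> range (lpow a)" by (metis rangeI)
next
  fix u v assume "u \<in> range (lpow a)" "v \<in> range (lpow a)"
  then obtain i j where "u = lpow a i" "v = lpow a j" by blast
  then have "m u v = lpow a (i + j)" by (simp add: lpow_add[OF assms])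
  then show "m u v \<in> range (lpow a)" by simp
next
  fix u v z assume "u \<in> range (lpow a)" "v \<in> range (lpow a)" "z \<in> L" "m u z = v"
  then show "z \<in> range (lpow a)" using left_mult_lpow_solution[OF assms] by blast
next
  fix u v z assume "u \<in> range (lpow a)" "v \<in> range (lpow a)" "z \<in> L" "m z u = v"
  then show "z \<in> range (lpow a)" using right_mult_lpow_solution[OF assms] by blast
qed

lemma gen_subloop_singleton:
  assumes "a \<in> L"
  shows "gen_subloop L m e {a} = orbit a e"
  unfolding gen_subloop_def
proof (rule antisym)
  have "lpow a 1 = a" by (simp add: lpow_def right_unit assms)
  then have "a \<in> orbit a e" using orbit_one[OF assms] by (metis rangeI)
  then show "\<Inter>{H. is_subloop L m e H \<and> {a} \<subseteq> H} \<subseteq> orbit a e"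
    by (intro Inter_lower) (simp add: is_subloop_orbit_one[OF assms])
next
  have "orbit a e \<subseteq> H" if "is_subloop L m e H" "a \<in> H" for H
  proof -
    have "e \<in> H" and "\<And>u v. u \<in> H \<Longrightarrow> v \<in> H \<Longrightarrow> m u v \<in> H"
      using that(1) unfolding is_subloop_def by blast+
    then have "lpow a k \<in> H" for k
      using that(2) by (induction k) (simp_all add: lpow_def)
    then show ?thesis by (auto simp: orbit_one[OF assms])
  qed
  then show "orbit a e \<subseteq> \<Inter>{H. is_subloop L m e H \<and> {a} \<subseteq> H}"
    by (intro Inter_greatest) simp
qed

end

theorem corollary4p7:
  fixes L :: "'a set" and m :: "'a \<Rightarrow> 'a \<Rightarrow> 'a" and e :: 'a and x :: 'a
  assumes "is_LC_loop L m e" and "finite L" and "x \<in> L"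
  shows "loop_order L m e x dvd card L"
proof -
  interpret finite_lc_loop L m e
    using assms(1,2) by unfold_locales (auto simp: is_LC_loop_def)
  have "loop_order L m e x = period x"
    using assms(3) by (simp add: loop_order_def gen_subloop_singleton card_orbit one_closed)
  then show ?thesis using period_dvd_card[OF assms(3)] by simp
qed

end
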